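(* For every instance $(V,E,\mu,S^* )$ of Rank Minimization, the minimum over valid partitions $(S_1,\dots,S_c,S^* )$ of the rank $1+|\{i:\mu(S_i)>\mu(S^* )\}|$ equals $1+C_l$, where $C_l$ is the number of connected components of the graph $G\setminus S^*$ that contain a vertex $v$ with $\mu(\{v\})>\mu(S^* )$.
   Context: $V$ is a finite set, $E\subseteq V\times V$ reflexive and symmetric, viewed as a simple undirected graph $G=(V,E)$; $\mu:2^V\to[0,\infty)$ is additive with $\mu(S)=0$ only for $S=\emptyset$; $\mathcal{S}$ is the set of nonempty subsets inducing connected subgraphs of $G$; $S^*\in\mathcal{S}\cup\{\emptyset\}$. $G\setminus S^*$ is the graph on $V\setminus S^*$ with all edges incident to $S^*$ removed. A valid partition is a partition $(S_1,\dots,S_c,S^* )$ of $V$ with all $S_i\in\mathcal{S}$. *)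

theory Defs
  imports Complex_Main "HOL-Library.Disjoint_Sets"
begin

text \<open>Graph G = (V,E) with E a reflexive symmetric relation on V.
  The subgraph induced by a vertex set W has edge set E \<inter> W \<times> W.\<close>

definition induced_edges :: "('a \<times> 'a) set \<Rightarrow> 'a set \<Rightarrow> ('a \<times> 'a) set" where
  "induced_edges E W = E \<inter> (W \<times> W)"

definition connected_set :: "('a \<times> 'a) set \<Rightarrow> 'a set \<Rightarrow> bool" where
  "connected_set E S \<longleftrightarrow> S \<noteq> {} \<and>
     (\<forall>x\<in>S. \<forall>y\<in>S. (x, y) \<in> (induced_edges E S)\<^sup>*)"

text \<open>Connected components of G minus S*: the graph on V - S* with all
  edges incident to S* removed.\<close>
definition components_without :: "'a set \<Rightarrow> ('a \<times> 'a) set \<Rightarrow> 'a set \<Rightarrow> 'a set set" where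
  "components_without V E Sstar =
     (\<lambda>v. {u \<in> V - Sstar. (v, u) \<in> (induced_edges E (V - Sstar))\<^sup>*}) ` (V - Sstar)"

text \<open>A valid partition (S_1,...,S_c,S*) of V, represented by the set of
  blocks {S_1,...,S_c} (a partition of V - S*, each block in \<S>).\<close>
definition valid_partition :: "'a set \<Rightarrow> ('a \<times> 'a) set \<Rightarrow> 'a set \<Rightarrow> 'a set set \<Rightarrow> bool" where
  "valid_partition V E Sstar P \<longleftrightarrow>
     partition_on (V - Sstar) P \<and> (\<forall>S\<in>P. connected_set E S)"

definition rank :: "('a set \<Rightarrow> real) \<Rightarrow> 'a set \<Rightarrow> 'a set set \<Rightarrow> nat" where
  "rank \<mu> Sstar P = 1 + card {S \<in> P. \<mu> S > \<mu> Sstar}"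

end

theory Submission
  imports Defs
begin

text \<open>Every block of a valid partition is connected in \<open>G \ S*\<close>, so it lies inside one
  component. A component containing a vertex \<open>v\<close> with \<open>\<mu>{v} > \<mu>(S*)\<close> therefore owns the block
  through \<open>v\<close>, which is heavy because \<open>\<mu>\<close> is monotone; distinct components own distinct blocks,
  so every valid partition has at least \<open>C\<^sub>l\<close> heavy blocks. The partition into the \<open>C\<^sub>l\<close> heavy
  components and the singletons of all remaining (necessarily light) vertices attains the bound.\<close>

definition component :: "('a \<times> 'a) set \<Rightarrow> 'a set \<Rightarrow> 'a \<Rightarrow> 'a set" where
  "component E W x = {u \<in> W. (x, u) \<in> (induced_edges E W)\<^sup>*}"

lemma components_without_eq: "components_without V E S = component E (V - S) ` (V - S)"
  by (simp add: components_without_def component_def)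

lemma component_subset: "component E W x \<subseteq> W"
  by (auto simp: component_def)

lemma component_self: "x \<in> W \<Longrightarrow> x \<in> component E W x"
  by (simp add: component_def)

lemma sym_rtrancl_induced_edges: "sym E \<Longrightarrow> sym ((induced_edges E W)\<^sup>*)"
  by (intro sym_rtrancl) (auto simp: induced_edges_def sym_def)

lemma component_eq:
  assumes "sym E" and "y \<in> component E W x"
  shows "component E W y = component E W x"
proof -
  have "(x, y) \<in> (induced_edges E W)\<^sup>*" "(y, x) \<in> (induced_edges E W)\<^sup>*"
    using assms sym_rtrancl_induced_edges[OF assms(1), of W] by (auto simp: component_def sym_def)
  then show ?thesis
    by (auto simp: component_def intro: rtrancl_trans)
qed

lemma components_eq_if_not_disjnt:
  "sym E \<Longrightarrow> \<not> disjnt (component E W x) (component E W y) \<Longrightarrow> component E W x = component E W y"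
  by (metis component_eq disjnt_iff)

lemma partition_on_components: "sym E \<Longrightarrow> partition_on W (component E W ` W)"
  by (rule partition_onI)
    (use component_self component_subset components_eq_if_not_disjnt in \<open>fastforce+\<close>)

lemma rtrancl_induced_edges_component:
  assumes "(x, u) \<in> (induced_edges E W)\<^sup>*"
  shows "(x, u) \<in> (induced_edges E (component E W x))\<^sup>*"
  using assms
proof (induction rule: rtrancl_induct)
  case (step y z)
  then have "(y, z) \<in> induced_edges E (component E W x)"
    by (auto simp: induced_edges_def component_def intro: rtrancl_into_rtrancl)
  with step.IH show ?case
    by (rule rtrancl_into_rtrancl)
qed simp

lemma connected_set_component:
  assumes "sym E" and "x \<in> W"
  shows "connected_set E (component E W x)"
  unfolding connected_set_def
proof (intro conjI ballI)
  show "component E W x \<noteq> {}"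
    using component_self[OF assms(2)] by blast
next
  fix y z assume y: "y \<in> component E W x" and z: "z \<in> component E W x"
  have "z \<in> component E W y"
    using z component_eq[OF assms(1) y] by simp
  then have "(y, z) \<in> (induced_edges E W)\<^sup>*"
    by (simp add: component_def)
  then show "(y, z) \<in> (induced_edges E (component E W x))\<^sup>*"
    using rtrancl_induced_edges_component component_eq[OF assms(1) y] by metis
qed

lemma connected_set_singleton: "connected_set E {v}"
  by (simp add: connected_set_def)

lemma connected_set_subset_component:
  assumes "connected_set E B" and "B \<subseteq> W" and "b \<in> B"
  shows "B \<subseteq> component E W b"
proof
  fix v assume "v \<in> B"
  then have "(b, v) \<in> (induced_edges E B)\<^sup>*"
    using assms(1,3) by (simp add: connected_set_def)
  moreover have "induced_edges E B \<subseteq> induced_edges E W"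
    using assms(2) by (auto simp: induced_edges_def)
  ultimately have "(b, v) \<in> (induced_edges E W)\<^sup>*"
    using rtrancl_mono by blast
  then show "v \<in> component E W b"
    using \<open>v \<in> B\<close> assms(2) by (auto simp: component_def)
qed

lemma additive_nonneg_mono:
  fixes \<mu> :: "'a set \<Rightarrow> 'b :: ordered_comm_monoid_add"
  assumes nonneg: "\<And>S. S \<subseteq> V \<Longrightarrow> \<mu> S \<ge> 0"
    and add: "\<And>A B. A \<subseteq> V \<Longrightarrow> B \<subseteq> V \<Longrightarrow> A \<inter> B = {} \<Longrightarrow> \<mu> (A \<union> B) = \<mu> A + \<mu> B"
    and "A \<subseteq> B" and "B \<subseteq> V"
  shows "\<mu> A \<le> \<mu> B"
proof -
  have "\<mu> B = \<mu> (A \<union> (B - A))"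
    using assms(3) by (simp add: Un_absorb1)
  also have "\<dots> = \<mu> A + \<mu> (B - A)"
    using assms(3,4) by (intro add) auto
  finally have "\<mu> B = \<mu> A + \<mu> (B - A)" .
  moreover have "0 \<le> \<mu> (B - A)"
    using nonneg assms(4) by blast
  ultimately show ?thesis
    by (simp add: add_increasing2)
qed

lemma partition_on_Un_singletons:
  assumes P: "partition_on A P" and "H \<subseteq> P"
  shows "partition_on A (H \<union> (\<lambda>x. {x}) ` (A - \<Union>H))"
proof (rule partition_onI)
  show "\<Union>(H \<union> (\<lambda>x. {x}) ` (A - \<Union>H)) = A"
    using assms partition_onD1[OF P] by blast
  show "{} \<notin> H \<union> (\<lambda>x. {x}) ` (A - \<Union>H)"
    using assms partition_onD3[OF P] by blast
next
  fix p q assume p: "p \<in> H \<union> (\<lambda>x. {x}) ` (A - \<Union>H)" and q: "q \<in> H \<union> (\<lambda>x. {x}) ` (A - \<Union>H)"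
    and "p \<noteq> q"
  show "disjnt p q"
  proof (cases "p \<in> H \<and> q \<in> H")
    case True
    then show ?thesis
      using \<open>p \<noteq> q\<close> \<open>H \<subseteq> P\<close> partition_onD2[OF P] by (auto simp: pairwise_def)
  next
    case False
    with p q \<open>p \<noteq> q\<close> show ?thesis
      by (auto simp: disjnt_def)
  qed
qed

definition heavy_components :: "('a \<times> 'a) set \<Rightarrow> 'a set \<Rightarrow> ('a set \<Rightarrow> 'b :: ord) \<Rightarrow> 'b \<Rightarrow> 'a set set" where
  "heavy_components E W \<mu> t = {C \<in> component E W ` W. \<exists>v\<in>C. t < \<mu> {v}}"

lemma card_heavy_components_le:
  fixes \<mu> :: "'a set \<Rightarrow> 'b :: preorder"
  assumes "sym E" and "finite W" and P: "partition_on W P" and conn: "\<forall>S\<in>P. connected_set E S"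
    and mono: "\<And>A B. A \<subseteq> B \<Longrightarrow> B \<subseteq> W \<Longrightarrow> \<mu> A \<le> \<mu> B"
  shows "card (heavy_components E W \<mu> t) \<le> card {S \<in> P. t < \<mu> S}"
proof (rule card_le_if_inj_on_rel[where r = "\<lambda>C S. S \<subseteq> C"])
  show "finite {S \<in> P. t < \<mu> S}"
    using finite_elements[OF assms(2) P] by simp
next
  fix C assume "C \<in> heavy_components E W \<mu> t"
  then obtain x v where C: "C = component E W x" and v: "v \<in> C" "t < \<mu> {v}"
    unfolding heavy_components_def by blast
  have "v \<in> W"
    using v(1) component_subset[of E W x] unfolding C by blast
  then obtain S where S: "S \<in> P" "v \<in> S"
    using partition_onD1[OF P] by blast
  have "S \<subseteq> W"
    using S(1) partition_onD1[OF P] by blast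
  have "connected_set E S"
    using conn S(1) by blast
  then have "S \<subseteq> component E W v"
    using \<open>S \<subseteq> W\<close> S(2) by (rule connected_set_subset_component)
  moreover have "component E W v = C"
    using component_eq[OF assms(1), of v W x] v C by simp
  ultimately have "S \<subseteq> C"
    by simp
  have "\<mu> {v} \<le> \<mu> S"
    using mono \<open>S \<subseteq> W\<close> S(2) by blast
  with v(2) have "t < \<mu> S"
    by (rule less_le_trans)
  with \<open>S \<subseteq> C\<close> show "\<exists>S. S \<in> {S \<in> P. t < \<mu> S} \<and> S \<subseteq> C"
    using S(1) by blast
next
  fix C1 C2 S
  assume "C1 \<in> heavy_components E W \<mu> t" and "C2 \<in> heavy_components E W \<mu> t"
    and S: "S \<in> {S \<in> P. t < \<mu> S}" "S \<subseteq> C1" "S \<subseteq> C2"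
  then obtain x1 x2 where "C1 = component E W x1" "C2 = component E W x2"
    unfolding heavy_components_def by blast
  moreover have "S \<noteq> {}"
    using S(1) partition_onD3[OF P] by blast
  then have "\<not> disjnt C1 C2"
    using S(2,3) by (auto simp: disjnt_def)
  ultimately show "C1 = C2"
    using components_eq_if_not_disjnt[OF assms(1)] by blast
qed

lemma heavy_blocks_of_heavy_components_and_singletons:
  fixes \<mu> :: "'a set \<Rightarrow> 'b :: preorder"
  assumes mono: "\<And>A B. A \<subseteq> B \<Longrightarrow> B \<subseteq> W \<Longrightarrow> \<mu> A \<le> \<mu> B"
    and H: "H = heavy_components E W \<mu> t"
  shows "{S \<in> H \<union> (\<lambda>v. {v}) ` (W - \<Union>H). t < \<mu> S} = H"
proof -
  have "t < \<mu> C" if "C \<in> H" for C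
  proof -
    obtain x v where C: "C = component E W x" and v: "v \<in> C" "t < \<mu> {v}"
      using \<open>C \<in> H\<close> unfolding H heavy_components_def by blast
    have "C \<subseteq> W"
      unfolding C by (rule component_subset)
    with v(1) have "\<mu> {v} \<le> \<mu> C"
      by (intro mono) auto
    with v(2) show ?thesis
      by (rule less_le_trans)
  qed
  moreover have "\<not> t < \<mu> {v}" if "v \<in> W - \<Union>H" for v
  proof
    assume "t < \<mu> {v}"
    have "v \<in> W" "v \<notin> \<Union>H"
      using that by auto
    then have "v \<in> component E W v" "component E W v \<in> component E W ` W"
      by (auto intro: component_self)
    with \<open>t < \<mu> {v}\<close> have "component E W v \<in> H"
      unfolding H heavy_components_def by blast
    with \<open>v \<notin> \<Union>H\<close> \<open>v \<in> component E W v\<close> show False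
      by blast
  qed
  ultimately show ?thesis
    by auto
qed

lemma ex_connected_partition_heavy_blocks_eq:
  fixes \<mu> :: "'a set \<Rightarrow> 'b :: preorder"
  assumes "sym E" and mono: "\<And>A B. A \<subseteq> B \<Longrightarrow> B \<subseteq> W \<Longrightarrow> \<mu> A \<le> \<mu> B"
  shows "\<exists>P. partition_on W P \<and> (\<forall>S\<in>P. connected_set E S) \<and>
    {S \<in> P. t < \<mu> S} = heavy_components E W \<mu> t"
proof (intro exI conjI)
  define H where "H = heavy_components E W \<mu> t"
  have "H \<subseteq> component E W ` W"
    by (auto simp: H_def heavy_components_def)
  then show "partition_on W (H \<union> (\<lambda>v. {v}) ` (W - \<Union>H))"
    by (rule partition_on_Un_singletons[OF partition_on_components[OF assms(1)]])
  show "\<forall>S \<in> H \<union> (\<lambda>v. {v}) ` (W - \<Union>H). connected_set E S"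
  proof
    fix S assume "S \<in> H \<union> (\<lambda>v. {v}) ` (W - \<Union>H)"
    then consider x where "x \<in> W" "S = component E W x" | v where "S = {v}"
      using \<open>H \<subseteq> component E W ` W\<close> by blast
    then show "connected_set E S"
      by cases (simp_all add: connected_set_component[OF assms(1)] connected_set_singleton)
  qed
  show "{S \<in> H \<union> (\<lambda>v. {v}) ` (W - \<Union>H). t < \<mu> S} = heavy_components E W \<mu> t"
    using heavy_blocks_of_heavy_components_and_singletons[OF mono H_def] by (simp add: H_def)
qed

theorem corollary2p5:
  fixes V :: "'a set" and E :: "('a \<times> 'a) set" and \<mu> :: "'a set \<Rightarrow> real"
    and Sstar :: "'a set"
  assumes finV: "finite V"
    and E_sub: "E \<subseteq> V \<times> V" and E_refl: "refl_on V E" and E_sym: "sym E"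
    and mu_nonneg: "\<And>S. S \<subseteq> V \<Longrightarrow> \<mu> S \<ge> 0"
    and mu_add: "\<And>A B. A \<subseteq> V \<Longrightarrow> B \<subseteq> V \<Longrightarrow> A \<inter> B = {} \<Longrightarrow> \<mu> (A \<union> B) = \<mu> A + \<mu> B"
    and mu_zero: "\<And>S. S \<subseteq> V \<Longrightarrow> \<mu> S = 0 \<longleftrightarrow> S = {}"
    and Sstar_sub: "Sstar \<subseteq> V"
    and Sstar_conn: "Sstar = {} \<or> connected_set E Sstar"
  shows "Min (rank \<mu> Sstar ` {P. valid_partition V E Sstar P}) =
         1 + card {C \<in> components_without V E Sstar. \<exists>v\<in>C. \<mu> {v} > \<mu> Sstar}"
proof -
  define W where "W = V - Sstar"
  have valid_iff:
    "valid_partition V E Sstar P \<longleftrightarrow> partition_on W P \<and> (\<forall>S\<in>P. connected_set E S)" for P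
    by (simp add: valid_partition_def W_def)
  have "finite W"
    using finV by (simp add: W_def)
  have mono: "\<mu> A \<le> \<mu> B" if "A \<subseteq> B" "B \<subseteq> W" for A B
    using mu_nonneg mu_add \<open>A \<subseteq> B\<close>
    by (rule additive_nonneg_mono) (use that in \<open>auto simp: W_def\<close>)
  let ?H = "heavy_components E W \<mu> (\<mu> Sstar)"
  have "1 + card ?H \<le> rank \<mu> Sstar P" if "valid_partition V E Sstar P" for P
    using card_heavy_components_le[OF E_sym \<open>finite W\<close> _ _ mono] that
    by (simp add: valid_iff rank_def)
  moreover obtain P0 where "valid_partition V E Sstar P0" "rank \<mu> Sstar P0 = 1 + card ?H"
    using ex_connected_partition_heavy_blocks_eq[where W = W and \<mu> = \<mu> and t = "\<mu> Sstar", OF E_sym mono]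
    by (auto simp: valid_iff rank_def)
  moreover have "finite {P. valid_partition V E Sstar P}"
    using finitely_many_partition_on[OF \<open>finite W\<close>] by (simp add: valid_iff)
  ultimately have "Min (rank \<mu> Sstar ` {P. valid_partition V E Sstar P}) = 1 + card ?H"
    by (intro Min_eqI) (auto intro: rev_image_eqI)
  then show ?thesis
    by (simp add: components_without_eq heavy_components_def W_def)
qed

end
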